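(* Let $G$ be a circle of circumference $1$, let $\mathbf{x}\in G^n$ be such that the agents are not on one semicircle, and let $i\in N$, $x_i'\in G$ be such that the agents in $\mathbf{x}'=(x_i',\mathbf{x}_{-i})$ are on one semicircle. Then $\mathrm{cost}(\mathrm{rc}(\mathbf{x}),x_i)\le\mathrm{cost}(\mathrm{lrm}(\mathbf{x}'),x_i)$.
   Context: $d(x,y)$ is the shorter-arc length; $\hat x$ the antipode of $x$; $\mathrm{cost}(P,x_i)=\mathbb{E}_{y\sim P}[d(x_i,y)]$. Agents are on one semicircle if all locations lie in some closed arc of length $1/2$. LRM: for a profile on one semicircle, fix a closed arc of minimal length containing all locations, with endpoints $l,r$; $\mathrm{lrm}$ returns $l$ w.p. $1/4$, $r$ w.p. $1/4$, and the midpoint of that arc w.p. $1/2$. RC: the antipodal points $\hat{x}_1,\dots,\hat{x}_n$ partition $G$ into arcs between cyclically consecutive antipodal points; $\mathrm{rc}$ returns the midpoint of each such arc with probability equal to its length. *)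

theory Defs
  imports Complex_Main
begin

text \<open>The circle G of circumference 1 is represented by the reals modulo 1:
  a real number y denotes the point (frac y) of the circle. Agents are indexed by {..<n}.\<close>

definition cdist :: "real \<Rightarrow> real \<Rightarrow> real" where
  "cdist x y = min (frac (x - y)) (frac (y - x))"

definition antipode :: "real \<Rightarrow> real" where
  "antipode x = x + 1/2"

definition in_arc :: "real \<Rightarrow> real \<Rightarrow> real \<Rightarrow> bool" where
  "in_arc a L y \<longleftrightarrow> frac (y - a) \<le> L"

definition arc_contains_all :: "nat \<Rightarrow> (nat \<Rightarrow> real) \<Rightarrow> real \<Rightarrow> real \<Rightarrow> bool" where
  "arc_contains_all n x a L \<longleftrightarrow> 0 \<le> L \<and> L \<le> 1 \<and> (\<forall>j<n. in_arc a L (x j))"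

definition one_semicircle :: "nat \<Rightarrow> (nat \<Rightarrow> real) \<Rightarrow> bool" where
  "one_semicircle n x \<longleftrightarrow> (\<exists>a. arc_contains_all n x a (1/2))"

definition minimal_arc :: "nat \<Rightarrow> (nat \<Rightarrow> real) \<Rightarrow> real \<Rightarrow> real \<Rightarrow> bool" where
  "minimal_arc n x a L \<longleftrightarrow> arc_contains_all n x a L \<and>
     (\<forall>a' L'. arc_contains_all n x a' L' \<longrightarrow> L \<le> L')"

text \<open>Finitely supported distributions as lists of (probability, point) pairs;
  the cost of a point is its expected distance to the random outcome.\<close>
definition cost :: "(real \<times> real) list \<Rightarrow> real \<Rightarrow> real" where
  "cost P y = (\<Sum>(p, z) \<leftarrow> P. p * cdist y z)"

text \<open>LRM for the fixed minimal arc [a, a+L]: endpoints l = a, r = a + L, midpoint a + L/2.\<close>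
definition lrm :: "real \<Rightarrow> real \<Rightarrow> (real \<times> real) list" where
  "lrm a L = [(1/4, a), (1/4, a + L), (1/2, a + L/2)]"

text \<open>RC: the distinct antipodal points (normalised to [0,1)) split the circle into arcs;
  the arc starting at p ends at the next antipodal point counterclockwise.\<close>
definition antipodes :: "nat \<Rightarrow> (nat \<Rightarrow> real) \<Rightarrow> real set" where
  "antipodes n x = (\<lambda>j. frac (antipode (x j))) ` {..<n}"

definition rc_gap :: "real set \<Rightarrow> real \<Rightarrow> real" where
  "rc_gap A p = (if A - {p} = {} then 1 else Min ((\<lambda>q. frac (q - p)) ` (A - {p})))"

definition rc :: "nat \<Rightarrow> (nat \<Rightarrow> real) \<Rightarrow> (real \<times> real) list" where
  "rc n x = map (\<lambda>p. (rc_gap (antipodes n x) p, p + rc_gap (antipodes n x) p / 2))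
              (sorted_list_of_set (antipodes n x))"

end

theory Submission
  imports Defs
begin

(* Proof idea.  Both sides of the inequality are compared with the constant 1/4.

   RC side: measure positions on the circle counterclockwise from the antipode
   c of agent i, so that x_i sits at position 1/2 and the RC cut points become
   reals 0 = u_0 < u_1 < ... < u_m < 1 (with u_{m+1} = 1).  The RC cost of x_i
   is the midpoint rule  sum_k (u_{k+1} - u_k) |1/2 - (u_k + u_{k+1})/2|  for
   the convex function t |-> |1/2 - t|, hence at most its integral over [0,1],
   which is 1/4.  This holds for every agent, whatever the profile.

   LRM side: if x is not on one semicircle, then the antipode of x_i lies in
   the minimal arc [a, a+L] of the deviated profile (otherwise an arc of length
   1/2 would cover x).  For such a point each of l, r and the midpoint is at
   distance 1/2 minus its offset from the antipode, and the expected distance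
   is at least 1/2 - L/2 >= 1/4 since L <= 1/2. *)

lemma frac_add_small:
  assumes "0 \<le> frac y + d" "frac y + d < 1"
  shows "frac (y + d) = frac y + d"
proof -
  have "frac (y + d) = frac (frac y + d)" by simp
  also have "\<dots> = frac y + d" using frac_eq[of "frac y + d"] assms by blast
  finally show ?thesis .
qed

lemma cdist_eq_abs:
  assumes "\<bar>x - y - of_int k\<bar> \<le> 1/2"
  shows "cdist x y = \<bar>x - y - of_int k\<bar>"
proof -
  define d where "d = x - y - of_int k"
  have d_half: "\<bar>d\<bar> \<le> 1/2" using assms by (simp add: d_def)
  have "frac (x - y) = frac (d + of_int k)" by (simp add: d_def)
  then have frac_xy: "frac (x - y) = frac d" by simp
  have "frac (y - x) = frac (- d + of_int (- k))" by (simp add: d_def)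
  then have frac_yx: "frac (y - x) = frac (- d)" by (simp only: frac_add_of_int_right)
  show ?thesis
  proof (cases "d \<ge> 0")
    case True
    have "frac d = d" using True d_half by (simp add: frac_eq)
    moreover have "d \<le> frac (- d)"
    proof (cases "d = 0")
      case False
      have "frac (- d) = frac (- d + 1)" by (metis frac_1_eq)
      also have "\<dots> = 1 - d" using True False d_half by (simp add: frac_eq)
      finally show ?thesis using d_half by simp
    qed simp
    ultimately show ?thesis using True by (simp add: cdist_def frac_xy frac_yx d_def[symmetric])
  next
    case False
    have "frac (- d) = - d" using False d_half by (simp add: frac_eq)
    moreover have "frac d = d + 1"
      using frac_1_eq[of d] False d_half by (simp add: frac_eq)
    ultimately show ?thesis using False d_half
      by (simp add: cdist_def frac_xy frac_yx d_def[symmetric])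
  qed
qed

section \<open>Rotated coordinates\<close>

definition rot :: "real \<Rightarrow> real \<Rightarrow> real" where
  "rot c q = frac (q - c)"

lemma rot_bounds: "0 \<le> rot c q" "rot c q < 1"
  by (simp_all add: rot_def frac_lt_1)

lemma rot_self [simp]: "rot c c = 0"
  by (simp add: rot_def)

lemma inj_on_rot: "inj_on (rot c) {0..<1}"
proof (rule inj_onI)
  fix q1 q2 assume q: "q1 \<in> {0..<1}" "q2 \<in> {0..<1}" "rot c q1 = rot c q2"
  obtain k where "q1 - c = q2 - c + of_int k" using q(3) unfolding rot_def by (rule frac_eqE)
  then have "q1 = q2 + of_int k" by simp
  then have "frac q1 = frac q2" by simp
  then show "q1 = q2" using q(1,2) by simp
qed

lemma frac_diff_rot:
  "frac (q - p) = (if rot c p \<le> rot c q then rot c q - rot c p else rot c q - rot c p + 1)"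
proof -
  have "frac (q - p) = frac ((q - c) - (p - c))" by simp
  then show ?thesis
    using frac_diff_pos[of "p - c" "q - c"] frac_diff_neg[of "q - c" "p - c"]
    unfolding rot_def by (simp split: if_split)
qed

text \<open>Distance from z to a point given in coordinates rotated around the
  antipode of z: z itself sits at position 1/2.\<close>
lemma cdist_rot_antipode:
  assumes c: "c = frac (z + 1/2)" and bounds: "0 \<le> rot c p + h" "rot c p + h \<le> 1"
  shows "cdist z (p + h) = \<bar>1/2 - (rot c p + h)\<bar>"
proof -
  define w where "w = rot c p + h"
  define k where "k = \<lfloor>z + 1/2\<rfloor> - \<lfloor>p - c\<rfloor> - 1"
  have c_eq: "c = z + 1/2 - of_int \<lfloor>z + 1/2\<rfloor>" using c by (simp add: frac_def)
  have rot_eq: "rot c p = p - c - of_int \<lfloor>p - c\<rfloor>" by (simp add: rot_def frac_def)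
  have e: "z - (p + h) - of_int k = 1/2 - w"
    unfolding k_def w_def of_int_diff of_int_1 using c_eq rot_eq by linarith
  have "\<bar>z - (p + h) - of_int k\<bar> \<le> 1/2"
    unfolding e using bounds by (simp add: w_def abs_if)
  from cdist_eq_abs[OF this] show ?thesis unfolding e w_def .
qed

section \<open>The midpoint rule on a partition of [0,1]\<close>

definition next_pt :: "real set \<Rightarrow> real \<Rightarrow> real" where
  "next_pt U u = Min (insert 1 {w \<in> U. u < w})"

lemma next_pt_bounds:
  assumes "finite U" "u < 1"
  shows "u < next_pt U u" "next_pt U u \<le> 1"
  using assms by (auto simp: next_pt_def)

lemma next_pt_le:
  assumes "finite U" "w \<in> U" "u < w"
  shows "next_pt U u \<le> w"
  using assms by (auto simp: next_pt_def)

lemma sum_next_pt_telescope: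
  fixes F :: "real \<Rightarrow> real"
  assumes "finite U" "\<forall>u\<in>U. u < 1"
  shows "(\<Sum>u\<in>U. F (next_pt U u) - F u) = F 1 - F (Min (insert 1 U))"
  using assms
proof (induction "card U" arbitrary: U)
  case 0
  then show ?case by simp
next
  case (Suc k)
  define m where "m = Min U"
  define U' where "U' = U - {m}"
  have "U \<noteq> {}" using Suc.hyps(2) by auto
  then have m: "m \<in> U" "\<forall>u\<in>U. m \<le> u" using Suc.prems by (simp_all add: m_def)
  have "card U' = k" using Suc.hyps(2) Suc.prems(1) m(1) by (simp add: U'_def)
  then have IH: "(\<Sum>u\<in>U'. F (next_pt U' u) - F u) = F 1 - F (Min (insert 1 U'))"
    using Suc.hyps(1) Suc.prems by (simp add: U'_def)
  have next_U': "next_pt U u = next_pt U' u" if "u \<in> U'" for u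
    using that m by (auto simp: next_pt_def U'_def intro!: arg_cong[where f = Min])
  have next_m: "next_pt U m = Min (insert 1 U')"
    using m by (auto simp: next_pt_def U'_def intro!: arg_cong[where f = Min])
  have sum_U': "(\<Sum>u\<in>U'. F (next_pt U u) - F u) = F 1 - F (Min (insert 1 U'))"
    using IH next_U' by simp
  have "(\<Sum>u\<in>U. F (next_pt U u) - F u)
      = (F (next_pt U m) - F m) + (\<Sum>u\<in>U'. F (next_pt U u) - F u)"
    using Suc.prems(1) m(1) by (simp add: sum.remove U'_def)
  also have "\<dots> = F 1 - F m" using sum_U' next_m by simp
  also have "m = Min (insert 1 U)" using Suc.prems m by (intro Min_eqI[symmetric]) auto
  finally show ?case .
qed

text \<open>A primitive of t \<mapsto> |1/2 - t| on [0,1].\<close>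
definition half_dist_primitive :: "real \<Rightarrow> real" where
  "half_dist_primitive y = (if y \<le> 1/2 then y/2 - y^2/2 else 1/8 + (y - 1/2)^2/2)"

text \<open>Midpoint rule for the convex function |1/2 - t|: on any subinterval
  [u,v] of [0,1], length times value at the midpoint is at most the integral.\<close>
lemma midpoint_le_half_dist_integral:
  assumes "0 \<le> u" "u \<le> v" "v \<le> (1::real)"
  shows "(v - u) * \<bar>1/2 - (u + v)/2\<bar> \<le> half_dist_primitive v - half_dist_primitive u"
proof -
  consider "v \<le> 1/2" | "1/2 < u" | "u \<le> 1/2" "1/2 < v"
    by linarith
  then show ?thesis
  proof cases
    case 1
    then show ?thesis using assms
      by (simp add: half_dist_primitive_def abs_if power2_eq_square field_simps)
  next
    case 2
    then show ?thesis using assms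
      by (simp add: half_dist_primitive_def abs_if power2_eq_square field_simps)
  next
    case 3
    then have "half_dist_primitive v - half_dist_primitive u - (v - u) * \<bar>1/2 - (u + v)/2\<bar>
             = (if u + v \<le> 1 then (v - 1/2)^2 else (u - 1/2)^2)"
      by (simp add: half_dist_primitive_def abs_if power2_eq_square field_simps)
    moreover have "0 \<le> (if u + v \<le> 1 then (v - 1/2)^2 else (u - 1/2)^2)" by simp
    ultimately show ?thesis by linarith
  qed
qed

lemma midpoint_sum_le_quarter:
  assumes "finite U" "U \<subseteq> {0..<1}" "0 \<in> U"
  shows "(\<Sum>t\<in>U. (next_pt U t - t) * \<bar>1/2 - (t + next_pt U t)/2\<bar>) \<le> 1/4"
proof -
  let ?G = half_dist_primitive
  have "(\<Sum>t\<in>U. (next_pt U t - t) * \<bar>1/2 - (t + next_pt U t)/2\<bar>)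
      \<le> (\<Sum>t\<in>U. ?G (next_pt U t) - ?G t)"
  proof (rule sum_mono)
    fix t assume "t \<in> U"
    then have "0 \<le> t" "t < 1" using assms(2) by auto
    then show "(next_pt U t - t) * \<bar>1/2 - (t + next_pt U t)/2\<bar> \<le> ?G (next_pt U t) - ?G t"
      using next_pt_bounds[OF assms(1), of t] midpoint_le_half_dist_integral[of t "next_pt U t"]
      by simp
  qed
  also have "\<dots> = ?G 1 - ?G (Min (insert 1 U))"
    using assms by (intro sum_next_pt_telescope) auto
  also have "Min (insert 1 U) = 0"
    using assms by (intro Min_eqI) auto
  finally show ?thesis by (simp add: half_dist_primitive_def power2_eq_square)
qed

section \<open>The RC mechanism\<close>

lemma rc_gap_rot:
  assumes finA: "finite A" and A_unit: "A \<subseteq> {0..<1}" and cA: "c \<in> A" and pA: "p \<in> A"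
  shows "rc_gap A p = next_pt (rot c ` A) (rot c p) - rot c p"
proof -
  let ?U = "rot c ` A" and ?u = "rot c"
  have finU: "finite ?U" using finA by simp
  have rot_eq: "?u q = ?u p \<Longrightarrow> q \<in> A \<Longrightarrow> q = p" for q
    using inj_onD[OF inj_on_rot] A_unit pA by blast
  have next_le_1: "next_pt ?U (?u p) \<le> 1"
    using next_pt_bounds[OF finU rot_bounds(2)] by simp
  show ?thesis
  proof (cases "A - {p} = {}")
    case True
    then have "A = {p}" "c = p" using pA cA by auto
    then have "{w \<in> ?U. ?u p < w} = {}" "?u p = 0" by simp_all
    then have "next_pt ?U (?u p) = 1" by (simp only: next_pt_def) simp
    then show ?thesis using True \<open>?u p = 0\<close> by (simp add: rc_gap_def)
  next
    case False
    define S where "S = (\<lambda>q. frac (q - p)) ` (A - {p})"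
    have finS: "finite S" "S \<noteq> {}" using finA False by (auto simp: S_def)
    have "Min S \<le> next_pt ?U (?u p) - ?u p"
    proof -
      have "next_pt ?U (?u p) \<in> insert 1 {w \<in> ?U. ?u p < w}"
        unfolding next_pt_def using finU by (intro Min_in) auto
      then consider "next_pt ?U (?u p) = 1" | q where "q \<in> A" "?u p < ?u q" "next_pt ?U (?u p) = ?u q"
        by auto
      then show ?thesis
      proof cases
        case 1
        show ?thesis
        proof (cases "p = c")
          case True
          obtain s where "s \<in> S" using finS by auto
          then have "Min S \<le> s" "s < 1" using finS by (auto simp: S_def frac_lt_1)
          then show ?thesis using 1 True by simp
        next
          case False
          then have "?u p \<noteq> 0" using rot_eq[OF _ cA] by force
          then have "frac (c - p) = 1 - ?u p" using frac_diff_rot[of c p c] rot_bounds[of c p] by simp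
          moreover have "frac (c - p) \<in> S" using cA False by (auto simp: S_def)
          ultimately show ?thesis using 1 finS by (metis Min_le)
        qed
      next
        case (2 q)
        then have "frac (q - p) = ?u q - ?u p" using frac_diff_rot[of q p c] by simp
        moreover have "frac (q - p) \<in> S" using 2 by (auto simp: S_def)
        ultimately show ?thesis using 2 finS by (metis Min_le)
      qed
    qed
    moreover have "next_pt ?U (?u p) - ?u p \<le> Min S"
    proof (rule Min.boundedI[OF finS])
      fix s assume "s \<in> S"
      then obtain q where q: "q \<in> A" "q \<noteq> p" "s = frac (q - p)" by (auto simp: S_def)
      show "next_pt ?U (?u p) - ?u p \<le> s"
      proof (cases "?u p < ?u q")
        case True
        then show ?thesis using q frac_diff_rot[of q p c] next_pt_le[OF finU, of "?u q"] by simp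
      next
        case False
        moreover have "?u q \<noteq> ?u p" using rot_eq q(1,2) by blast
        ultimately show ?thesis using q frac_diff_rot[of q p c] next_le_1 rot_bounds[of c q] by simp
      qed
    qed
    ultimately show ?thesis using False by (simp add: rc_gap_def S_def)
  qed
qed

text \<open>Under RC, every agent pays at most 1/4: its own antipode is a cut point,
  and in coordinates rotated around it the cost is a midpoint sum.\<close>
lemma rc_cost_le_quarter:
  assumes "i < n"
  shows "cost (rc n x) (x i) \<le> 1/4"
proof -
  define A where "A = antipodes n x"
  define c where "c = frac (x i + 1/2)"
  define U where "U = rot c ` A"
  define psi where "psi t = (next_pt U t - t) * \<bar>1/2 - (t + next_pt U t)/2\<bar>" for t
  have finA: "finite A" by (simp add: A_def antipodes_def)
  have A_unit: "A \<subseteq> {0..<1}" by (auto simp: A_def antipodes_def frac_lt_1)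
  have cA: "c \<in> A" using assms by (auto simp: A_def antipodes_def antipode_def c_def)
  have finU: "finite U" using finA by (simp add: U_def)
  have U_unit: "U \<subseteq> {0..<1}" using rot_bounds by (auto simp: U_def)
  have zero_U: "0 \<in> U" using cA unfolding U_def by (metis rot_self image_eqI)
  have term_eq: "rc_gap A p * cdist (x i) (p + rc_gap A p / 2) = psi (rot c p)" if "p \<in> A" for p
  proof -
    have gap: "rc_gap A p = next_pt U (rot c p) - rot c p"
      unfolding U_def by (rule rc_gap_rot[OF finA A_unit cA that])
    have mid: "rot c p + rc_gap A p / 2 = (rot c p + next_pt U (rot c p)) / 2"
      by (simp add: gap field_simps)
    have "rot c p < next_pt U (rot c p)" "next_pt U (rot c p) \<le> 1"
      using next_pt_bounds[OF finU rot_bounds(2)] by auto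
    then have "0 \<le> rot c p + rc_gap A p / 2" "rot c p + rc_gap A p / 2 \<le> 1"
      using rot_bounds[of c p] by (simp_all add: mid)
    from cdist_rot_antipode[OF c_def this]
    have "cdist (x i) (p + rc_gap A p / 2) = \<bar>1/2 - (rot c p + next_pt U (rot c p)) / 2\<bar>"
      by (simp only: mid)
    then show ?thesis unfolding psi_def gap[symmetric] by simp
  qed
  have "cost (rc n x) (x i) = (\<Sum>p\<in>A. rc_gap A p * cdist (x i) (p + rc_gap A p / 2))"
    by (simp add: cost_def rc_def A_def[symmetric] comp_def sum_list_distinct_conv_sum_set finA)
  also have "\<dots> = (\<Sum>p\<in>A. psi (rot c p))" using term_eq by simp
  also have "\<dots> = (\<Sum>t\<in>U. psi t)"
    unfolding U_def by (rule sum.reindex[symmetric, unfolded comp_def])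
      (use inj_on_subset[OF inj_on_rot A_unit] in simp)
  also have "\<dots> \<le> 1/4" unfolding psi_def
    by (rule midpoint_sum_le_quarter[OF finU U_unit zero_U])
  finally show ?thesis .
qed

section \<open>The LRM mechanism\<close>

lemma minimal_arc_le_half:
  assumes "one_semicircle n x" "minimal_arc n x a L"
  shows "0 \<le> L" "L \<le> 1/2"
proof -
  show "0 \<le> L" using assms(2) by (simp add: minimal_arc_def arc_contains_all_def)
  obtain b where "arc_contains_all n x b (1/2)" using assms(1) by (auto simp: one_semicircle_def)
  then show "L \<le> 1/2" using assms(2) unfolding minimal_arc_def by blast
qed

text \<open>If a single agent i can move the profile onto one semicircle, the
  antipode of its original location lies in the resulting minimal arc: otherwise
  the minimal arc, stretched to length 1/2 towards that antipode, would already
  cover the original profile.\<close>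
lemma antipode_in_minimal_arc:
  assumes not_semi: "\<not> one_semicircle n x"
    and semi': "one_semicircle n (x(i := y))"
    and arc: "minimal_arc n (x(i := y)) a L"
  shows "frac (x i + 1/2 - a) \<le> L"
proof (rule ccontr)
  define t where "t = frac (x i + 1/2 - a)"
  assume "\<not> frac (x i + 1/2 - a) \<le> L"
  then have L_t: "L < t" by (simp add: t_def)
  have L_half: "L \<le> 1/2" using minimal_arc_le_half[OF semi' arc] by simp
  have others: "frac (x j - a) \<le> L" if "j < n" "j \<noteq> i" for j
    using arc that by (auto simp: minimal_arc_def arc_contains_all_def in_arc_def)
  txt \<open>Move the start of the arc back by d: enough to reach x i when t < 1/2,
    and little enough to keep the other agents within length 1/2.\<close>
  define d where "d = max 0 (1/2 - t)"
  have "arc_contains_all n x (a - d) (1/2)"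
    unfolding arc_contains_all_def in_arc_def
  proof (intro conjI allI impI)
    fix j assume "j < n"
    show "frac (x j - (a - d)) \<le> 1/2"
    proof (cases "j = i")
      case True
      have "frac (x i + 1/2 - a + (d - 1/2)) = t + (d - 1/2)"
        using frac_add_small[of "x i + 1/2 - a" "d - 1/2"] frac_lt_1[of "x i + 1/2 - a"]
        by (simp add: t_def d_def)
      then show ?thesis using True frac_lt_1[of "x i + 1/2 - a"] by (simp add: t_def d_def algebra_simps)
    next
      case False
      have s: "0 \<le> frac (x j - a)" "frac (x j - a) \<le> L" using others[OF \<open>j < n\<close> False] by simp_all
      then have "frac (x j - a + d) = frac (x j - a) + d"
        using L_t L_half by (intro frac_add_small) (simp_all add: d_def)
      then have "frac (x j - (a - d)) = frac (x j - a) + d" by (simp add: algebra_simps)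
      then show ?thesis using s L_t L_half by (auto simp: d_def max_def)
    qed
  qed simp_all
  then show False using not_semi by (auto simp: one_semicircle_def)
qed

lemma cdist_arc_point:
  assumes "frac (z + 1/2 - a) \<le> 1/2" "0 \<le> s" "s \<le> 1/2"
  shows "cdist z (a + s) = 1/2 - \<bar>frac (z + 1/2 - a) - s\<bar>"
proof -
  define t where "t = frac (z + 1/2 - a)"
  define f where "f = \<lfloor>z + 1/2 - a\<rfloor>"
  have z_eq: "z = a + t - 1/2 + of_int f" by (simp add: t_def f_def frac_def)
  have t: "0 \<le> t" "t \<le> 1/2" using assms(1) by (simp_all add: t_def)
  have "cdist z (a + s) = 1/2 - \<bar>t - s\<bar>"
  proof (cases "s \<le> t")
    case True
    have e: "z - (a + s) - of_int f = t - s - 1/2" by (simp add: z_eq)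
    have "\<bar>z - (a + s) - of_int f\<bar> \<le> 1/2" unfolding e using True t assms by (simp add: abs_if)
    from cdist_eq_abs[OF this] show ?thesis unfolding e using True t assms by (auto simp: abs_if)
  next
    case False
    have e: "z - (a + s) - of_int (f - 1) = t - s + 1/2" by (simp add: z_eq)
    have "\<bar>z - (a + s) - of_int (f - 1)\<bar> \<le> 1/2" unfolding e using False t assms by (simp add: abs_if)
    from cdist_eq_abs[OF this] show ?thesis unfolding e using False t assms by (auto simp: abs_if)
  qed
  then show ?thesis by (simp add: t_def)
qed

lemma lrm_cost_ge_quarter:
  assumes "0 \<le> L" "L \<le> 1/2" "frac (z + 1/2 - a) \<le> L"
  shows "1/4 \<le> cost (lrm a L) z"
proof -
  define t where "t = frac (z + 1/2 - a)"
  have t: "0 \<le> t" "t \<le> L" using assms by (simp_all add: t_def)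
  have t_half: "t \<le> 1/2" using t assms by simp
  have dist_l: "cdist z a = 1/2 - t"
    using cdist_arc_point[of z a 0] t t_half by (simp add: t_def)
  have dist_r: "cdist z (a + L) = 1/2 - (L - t)"
    using cdist_arc_point[of z a L] t t_half assms by (simp add: t_def)
  have dist_mid: "cdist z (a + L/2) = 1/2 - \<bar>t - L/2\<bar>"
    using cdist_arc_point[of z a "L/2"] t t_half assms by (simp add: t_def)
  have "cost (lrm a L) z = 1/4 * cdist z a + 1/4 * cdist z (a + L) + 1/2 * cdist z (a + L/2)"
    by (simp add: cost_def lrm_def)
  also have "\<dots> = 1/4 * (1/2 - t) + 1/4 * (1/2 - (L - t)) + 1/2 * (1/2 - \<bar>t - L/2\<bar>)"
    using dist_l dist_r dist_mid by simp
  finally have cost_eq: "cost (lrm a L) z = 1/2 - L/4 - \<bar>t - L/2\<bar> / 2"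
    by (simp add: field_simps)
  have "\<bar>t - L/2\<bar> \<le> L/2" using t by (auto simp: abs_if)
  then show ?thesis unfolding cost_eq using assms(2) by (simp add: field_simps)
qed

theorem mainTheorem14:
  fixes n i :: nat and x :: "nat \<Rightarrow> real" and y a L :: real
  assumes "\<not> one_semicircle n x"
    and "i < n"
    and "one_semicircle n (x(i := y))"
    and "minimal_arc n (x(i := y)) a L"
  shows "cost (rc n x) (x i) \<le> cost (lrm a L) (x i)"
proof -
  have "cost (rc n x) (x i) \<le> 1/4"
    using rc_cost_le_quarter[OF assms(2)] .
  also have "1/4 \<le> cost (lrm a L) (x i)"
    using lrm_cost_ge_quarter minimal_arc_le_half[OF assms(3,4)]
      antipode_in_minimal_arc[OF assms(1,3,4)] by blast
  finally show ?thesis .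
qed

end
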